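(* Let $\kappa$ be a cardinal (finite or infinite), let $\mathbb{F}$ be a field, and let $V$ be the vector space over $\mathbb{F}$ presented by generators $x_\alpha, y_\alpha, z_\alpha$ ($\alpha\in\kappa$) subject to the relations $x_\alpha+y_\alpha+z_\alpha=0$ ($\alpha\in\kappa$). Define $F\colon \mathcal{P}(\kappa)^3\to \mathrm{Sub}(V)$ by $F(A,B,C)=\mathrm{Span}\{x_\alpha:\alpha\in A\}+\mathrm{Span}\{y_\beta:\beta\in B\}+\mathrm{Span}\{z_\gamma:\gamma\in C\}$. Then the restriction of $F$ to $M_3[\mathcal{P}(\kappa)]$ is a bounded lattice embedding $M_3[\mathcal{P}(\kappa)]\to\mathrm{Sub}(V)$. Consequently, when $\kappa$ is infinite, the restriction of $F$ to the lattice $S$ is a bounded lattice embedding $S\to \mathrm{Sub}(V)$; in particular $S$ is isomorphic to a bounded sublattice of the lattice of all subspaces of a vector space.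
   Context: $\mathcal{P}(\kappa)$ is the Boolean lattice of all subsets of $\kappa$ and $\mathrm{Sub}(V)$ is the lattice of all subspaces of $V$ (join is the sum of subspaces, meet is intersection). For a distributive lattice $L$, a triple $(a,b,c)\in L^3$ is balanced if $a\wedge b=a\wedge c=b\wedge c$; $M_3[L]$ denotes the set of balanced triples, which is a lattice with componentwise meet and with join $(a,b,c)\vee(a',b',c')=\overline{(a\vee a',b\vee b',c\vee c')}$, where for $(a,b,c)\in L^3$ one sets $\mu(a,b,c)=(a\wedge b)\vee(a\wedge c)\vee(b\wedge c)$ and $\overline{(a,b,c)}=(a\vee\mu(a,b,c),\,b\vee\mu(a,b,c),\,c\vee\mu(a,b,c))$. For infinite $\kappa$: $\mathcal{F}(\kappa)$ is the set of subsets $X\subseteq\kappa$ that are finite or have finite complement $\kappa\setminus X$ (a Boolean sublattice of $\mathcal{P}(\kappa)$); $T=\{(A,B,C)\in\mathcal{F}(\kappa)^3 : C\setminus \mu(A,B,C)\text{ is finite}\}$, where $\mu(A,B,C)=(A\cap B)\cup(A\cap C)\cup(B\cap C)$; and $S=T\cap M_3[\mathcal{F}(\kappa)]$, ordered componentwise (a bounded sublattice of $M_3[\mathcal{F}(\kappa)]$, itself a sublattice of $M_3[\mathcal{P}(\kappa)]$). *)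

theory Defs
  imports Main HOL.Modules "HOL-Library.Function_Algebras"
begin

text \<open>Concrete model of V: the relations x_a + y_a + z_a = 0 let us eliminate z_a = - x_a - y_a,
  so V is the free F-vector space on the basis x_a, y_a (a in K).  Vectors are finitely supported
  functions K x bool -> F; (a,True) is the coordinate of x_a and (a,False) that of y_a.\<close>

type_synonym ('a, 'f) vec = "'a \<times> bool \<Rightarrow> 'f"

definition vscale :: "'f::field \<Rightarrow> ('a, 'f) vec \<Rightarrow> ('a, 'f) vec" where
  "vscale c v = (\<lambda>i. c * v i)"

definition Vsp :: "'a set \<Rightarrow> ('a, 'f::field) vec set" where
  "Vsp K = {v. finite {i. v i \<noteq> 0} \<and> (\<forall>i. v i \<noteq> 0 \<longrightarrow> fst i \<in> K)}"

definition xg :: "'a \<Rightarrow> ('a, 'f::field) vec" where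
  "xg a = (\<lambda>i. if i = (a, True) then 1 else 0)"

definition yg :: "'a \<Rightarrow> ('a, 'f::field) vec" where
  "yg a = (\<lambda>i. if i = (a, False) then 1 else 0)"

definition zg :: "'a \<Rightarrow> ('a, 'f::field) vec" where
  "zg a = - xg a - yg a"

definition vspan :: "('a, 'f::field) vec set \<Rightarrow> ('a, 'f) vec set" where
  "vspan S = module.span vscale S"

definition SubV :: "'a set \<Rightarrow> ('a, 'f::field) vec set set" where
  "SubV K = {W. W \<subseteq> Vsp K \<and> module.subspace vscale W}"

definition ssum :: "('a, 'f::field) vec set \<Rightarrow> ('a, 'f) vec set \<Rightarrow> ('a, 'f) vec set" where
  "ssum U W = {u + w | u w. u \<in> U \<and> w \<in> W}"

definition Fmap :: "'a set \<times> 'a set \<times> 'a set \<Rightarrow> ('a, 'f::field) vec set" where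
  "Fmap t = (case t of (A, B, C) \<Rightarrow>
     ssum (ssum (vspan (xg ` A)) (vspan (yg ` B))) (vspan (zg ` C)))"

definition mu3 :: "'a set \<times> 'a set \<times> 'a set \<Rightarrow> 'a set" where
  "mu3 t = (case t of (a, b, c) \<Rightarrow> (a \<inter> b) \<union> (a \<inter> c) \<union> (b \<inter> c))"

definition balanced :: "'a set \<times> 'a set \<times> 'a set \<Rightarrow> bool" where
  "balanced t = (case t of (a, b, c) \<Rightarrow> a \<inter> b = a \<inter> c \<and> a \<inter> c = b \<inter> c)"

definition bclosure :: "'a set \<times> 'a set \<times> 'a set \<Rightarrow> 'a set \<times> 'a set \<times> 'a set" where
  "bclosure t = (case t of (a, b, c) \<Rightarrow> (a \<union> mu3 t, b \<union> mu3 t, c \<union> mu3 t))"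

definition M3P :: "'a set \<Rightarrow> ('a set \<times> 'a set \<times> 'a set) set" where
  "M3P K = {(a, b, c). a \<subseteq> K \<and> b \<subseteq> K \<and> c \<subseteq> K \<and> balanced (a, b, c)}"

definition m3meet :: "'a set \<times> 'a set \<times> 'a set \<Rightarrow> 'a set \<times> 'a set \<times> 'a set \<Rightarrow> 'a set \<times> 'a set \<times> 'a set" where
  "m3meet s t = (case s of (a, b, c) \<Rightarrow> case t of (a', b', c') \<Rightarrow> (a \<inter> a', b \<inter> b', c \<inter> c'))"

definition m3join :: "'a set \<times> 'a set \<times> 'a set \<Rightarrow> 'a set \<times> 'a set \<times> 'a set \<Rightarrow> 'a set \<times> 'a set \<times> 'a set" where
  "m3join s t = (case s of (a, b, c) \<Rightarrow> case t of (a', b', c') \<Rightarrow> bclosure (a \<union> a', b \<union> b', c \<union> c'))"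

definition FinCof :: "'a set \<Rightarrow> 'a set set" where
  "FinCof K = {X. X \<subseteq> K \<and> (finite X \<or> finite (K - X))}"

definition Tset :: "'a set \<Rightarrow> ('a set \<times> 'a set \<times> 'a set) set" where
  "Tset K = {(A, B, C). A \<in> FinCof K \<and> B \<in> FinCof K \<and> C \<in> FinCof K \<and> finite (C - mu3 (A, B, C))}"

definition M3F :: "'a set \<Rightarrow> ('a set \<times> 'a set \<times> 'a set) set" where
  "M3F K = {(a, b, c). a \<in> FinCof K \<and> b \<in> FinCof K \<and> c \<in> FinCof K \<and> balanced (a, b, c)}"

definition Sset :: "'a set \<Rightarrow> ('a set \<times> 'a set \<times> 'a set) set" where
  "Sset K = Tset K \<inter> M3F K"

definition bounded_lattice_embedding ::
  "'x set \<Rightarrow> ('x \<Rightarrow> 'x \<Rightarrow> 'x) \<Rightarrow> ('x \<Rightarrow> 'x \<Rightarrow> 'x) \<Rightarrow> 'x \<Rightarrow> 'x \<Rightarrow>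
   'y set \<Rightarrow> ('y \<Rightarrow> 'y \<Rightarrow> 'y) \<Rightarrow> ('y \<Rightarrow> 'y \<Rightarrow> 'y) \<Rightarrow> 'y \<Rightarrow> 'y \<Rightarrow> ('x \<Rightarrow> 'y) \<Rightarrow> bool" where
  "bounded_lattice_embedding L meetL joinL botL topL M meetM joinM botM topM f \<longleftrightarrow>
     f ` L \<subseteq> M \<and> inj_on f L \<and>
     (\<forall>x\<in>L. \<forall>y\<in>L. f (meetL x y) = meetM (f x) (f y) \<and> f (joinL x y) = joinM (f x) (f y)) \<and>
     f botL = botM \<and> f topL = topM"

end

theory Submission
  imports Defs
begin

text \<open>F(A, B, C) can be described one index at a time: a vector lies in it iff for every \<alpha> its
  \<alpha>-component lies in the span of those of x_\<alpha>, y_\<alpha>, z_\<alpha> whose index set contains \<alpha>.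
  Any two of the three span the \<alpha>-plane, while each alone spans a distinct line.  For balanced
  triples every index lies in none, exactly one, or all three of A, B, C, so the local spans
  determine the triple (injectivity) and intersect componentwise (meets).  Joins are preserved
  for arbitrary triples: the span of a union is the sum of the spans, and closing a triple under
  mu3 adds only generators at indices whose plane is already spanned.\<close>

interpretation V: module "vscale :: 'f::field \<Rightarrow> ('a, 'f) vec \<Rightarrow> ('a, 'f) vec"
  by unfold_locales (auto simp: vscale_def fun_eq_iff algebra_simps)

lemma Fmap_eq_span: "Fmap (A, B, C) = vspan (xg ` A \<union> yg ` B \<union> zg ` C)"
  by (simp add: Fmap_def vspan_def ssum_def V.span_Un)

lemma subspace_Fmap: "V.subspace (Fmap t)"
  by (cases t) (simp add: Fmap_eq_span vspan_def)

text \<open>In the \<alpha>-plane with coordinates (v (\<alpha>, True), v (\<alpha>, False)) the generators are x = (1, 0),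
  y = (0, 1) and z = (-1, -1); the disjuncts list the span of those present at \<alpha>, which is the
  whole plane as soon as two are present.\<close>
definition in_local_span :: "'a set \<times> 'a set \<times> 'a set \<Rightarrow> ('a, 'f::field) vec \<Rightarrow> 'a \<Rightarrow> bool" where
  "in_local_span t v \<alpha> \<longleftrightarrow> (case t of (A, B, C) \<Rightarrow>
     \<alpha> \<in> mu3 t \<or> (\<alpha> \<in> A \<and> v (\<alpha>, False) = 0) \<or> (\<alpha> \<in> B \<and> v (\<alpha>, True) = 0)
     \<or> (\<alpha> \<in> C \<and> v (\<alpha>, True) = v (\<alpha>, False)) \<or> (v (\<alpha>, True) = 0 \<and> v (\<alpha>, False) = 0))"

definition local_span_vecs :: "'a set \<times> 'a set \<times> 'a set \<Rightarrow> ('a, 'f::field) vec set" where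
  "local_span_vecs t = {v. finite {i. v i \<noteq> 0} \<and> (\<forall>\<alpha>. in_local_span t v \<alpha>)}"

lemma in_local_span_add:
  "in_local_span t u \<alpha> \<Longrightarrow> in_local_span t w \<alpha> \<Longrightarrow> in_local_span t (u + w) \<alpha>"
  by (cases t) (auto simp: in_local_span_def mu3_def)

lemma in_local_span_scale: "in_local_span t u \<alpha> \<Longrightarrow> in_local_span t (vscale c u) \<alpha>"
  by (cases t) (auto simp: in_local_span_def mu3_def vscale_def)

lemma subspace_local_span_vecs:
  fixes t :: "'a set \<times> 'a set \<times> 'a set"
  shows "V.subspace (local_span_vecs t :: ('a, 'f::field) vec set)"
  unfolding V.subspace_def
proof (intro conjI ballI allI)
  show "0 \<in> (local_span_vecs t :: ('a, 'f) vec set)"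
    by (cases t) (simp add: local_span_vecs_def in_local_span_def)
next
  fix u w :: "('a, 'f) vec"
  assume "u \<in> local_span_vecs t" "w \<in> local_span_vecs t"
  moreover have "{i. (u + w) i \<noteq> 0} \<subseteq> {i. u i \<noteq> 0} \<union> {i. w i \<noteq> 0}" by auto
  ultimately show "u + w \<in> local_span_vecs t"
    by (auto simp: local_span_vecs_def in_local_span_add intro: finite_subset)
next
  fix c and u :: "('a, 'f) vec"
  assume "u \<in> local_span_vecs t"
  moreover have "{i. vscale c u i \<noteq> 0} \<subseteq> {i. u i \<noteq> 0}" by (auto simp: vscale_def)
  ultimately show "vscale c u \<in> local_span_vecs t"
    by (auto simp: local_span_vecs_def in_local_span_scale intro: finite_subset)
qed

lemma xg_in_local_span_vecs_iff:
  "(xg a :: ('a, 'f::field) vec) \<in> local_span_vecs (A, B, C) \<longleftrightarrow> a \<in> mu3 (A, B, C) \<or> a \<in> A"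
proof -
  have "{i. (xg a :: ('a, 'f) vec) i \<noteq> 0} = {(a, True)}" by (auto simp: xg_def)
  then show ?thesis by (auto simp: local_span_vecs_def in_local_span_def xg_def)
qed

lemma yg_in_local_span_vecs_iff:
  "(yg a :: ('a, 'f::field) vec) \<in> local_span_vecs (A, B, C) \<longleftrightarrow> a \<in> mu3 (A, B, C) \<or> a \<in> B"
proof -
  have "{i. (yg a :: ('a, 'f) vec) i \<noteq> 0} = {(a, False)}" by (auto simp: yg_def)
  then show ?thesis by (auto simp: local_span_vecs_def in_local_span_def yg_def)
qed

lemma zg_in_local_span_vecs_iff:
  "(zg a :: ('a, 'f::field) vec) \<in> local_span_vecs (A, B, C) \<longleftrightarrow> a \<in> mu3 (A, B, C) \<or> a \<in> C"
proof -
  have "{i. (zg a :: ('a, 'f) vec) i \<noteq> 0} = {(a, True), (a, False)}"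
    by (auto simp: zg_def xg_def yg_def split: if_splits)
  moreover have "finite {i. i \<noteq> (a, True) \<longrightarrow> i = (a, False)}"
    by (rule finite_subset[of _ "{(a, True), (a, False)}"]) auto
  ultimately show ?thesis by (auto simp: local_span_vecs_def in_local_span_def zg_def xg_def yg_def)
qed

lemma Fmap_subset_local_span_vecs: "Fmap t \<subseteq> local_span_vecs t"
proof -
  obtain A B C where t: "t = (A, B, C)" by (cases t)
  have "xg ` A \<union> yg ` B \<union> zg ` C \<subseteq> local_span_vecs t"
    by (auto simp: t xg_in_local_span_vecs_iff yg_in_local_span_vecs_iff zg_in_local_span_vecs_iff)
  then show ?thesis
    unfolding t Fmap_eq_span vspan_def by (metis V.span_minimal subspace_local_span_vecs t)
qed

lemma coord_component_in_Fmap: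
  fixes v :: "('a, 'f::field) vec"
  assumes "in_local_span (A, B, C) v \<alpha>"
  shows "(\<lambda>i. if fst i = \<alpha> then v i else 0) \<in> Fmap (A, B, C)"
proof -
  let ?W = "Fmap (A, B, C) :: ('a, 'f) vec set"
  have x: "\<alpha> \<in> A \<Longrightarrow> xg \<alpha> \<in> ?W" and y: "\<alpha> \<in> B \<Longrightarrow> yg \<alpha> \<in> ?W"
    and z: "\<alpha> \<in> C \<Longrightarrow> zg \<alpha> \<in> ?W"
    by (auto simp: Fmap_eq_span vspan_def intro: V.span_base)
  have closed: "V.subspace ?W" by (rule subspace_Fmap)
  have yxz: "yg \<alpha> = - xg \<alpha> - zg \<alpha>" and xyz: "xg \<alpha> = - yg \<alpha> - zg \<alpha>"
    by (simp_all add: zg_def)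
  have zsc: "vscale p (xg \<alpha>) + vscale p (yg \<alpha>) = vscale (- p) (zg \<alpha>)" for p :: 'f
    by (simp add: zg_def fun_eq_iff vscale_def algebra_simps)
  have comp: "(\<lambda>i. if fst i = \<alpha> then v i else 0) =
      vscale (v (\<alpha>, True)) (xg \<alpha>) + vscale (v (\<alpha>, False)) (yg \<alpha>)"
    by (auto simp: fun_eq_iff vscale_def xg_def yg_def)
  have both: "?thesis" if "xg \<alpha> \<in> ?W" "yg \<alpha> \<in> ?W"
    unfolding comp using that closed by (simp add: V.subspace_add V.subspace_scale)
  consider "\<alpha> \<in> A" "\<alpha> \<in> B" | "\<alpha> \<in> A" "\<alpha> \<in> C" | "\<alpha> \<in> B" "\<alpha> \<in> C"
    | "\<alpha> \<in> A" "v (\<alpha>, False) = 0" | "\<alpha> \<in> B" "v (\<alpha>, True) = 0"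
    | "\<alpha> \<in> C" "v (\<alpha>, True) = v (\<alpha>, False)" | "v (\<alpha>, True) = 0" "v (\<alpha>, False) = 0"
    using assms by (auto simp: in_local_span_def mu3_def)
  then show ?thesis
  proof cases
    case 1 then show ?thesis using both x y by blast
  next
    case 2 then show ?thesis using both x z closed yxz by (metis V.subspace_diff V.subspace_neg)
  next
    case 3 then show ?thesis using both y z closed xyz by (metis V.subspace_diff V.subspace_neg)
  next
    case 4 then show ?thesis unfolding comp using x closed by (simp add: V.subspace_scale)
  next
    case 5 then show ?thesis unfolding comp using y closed by (simp add: V.subspace_scale)
  next
    case 6 then show ?thesis
      unfolding comp using z closed by (simp add: zsc V.subspace_scale V.subspace_neg)
  next
    case 7 then show ?thesis unfolding comp using closed by (simp add: V.subspace_0)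
  qed
qed

lemma mem_Fmap_of_supported_local_span_vec:
  fixes v :: "('a, 'f::field) vec"
  assumes "finite S" and "v \<in> local_span_vecs t" and "\<And>i. v i \<noteq> 0 \<Longrightarrow> fst i \<in> S"
  shows "v \<in> Fmap t"
  using assms
proof (induction S arbitrary: v rule: finite_induct)
  case empty
  then have "v = 0" by (auto simp: fun_eq_iff)
  then show ?case using V.subspace_0[OF subspace_Fmap] by (simp only:)
next
  case (insert \<alpha> S)
  obtain A B C where t: "t = (A, B, C)" by (cases t)
  define comp where "comp = (\<lambda>i. if fst i = \<alpha> then v i else 0)"
  define rest where "rest = (\<lambda>i. if fst i = \<alpha> then 0 else v i)"
  have "comp \<in> Fmap t"
    using insert.prems(1) unfolding comp_def by (simp add: t local_span_vecs_def coord_component_in_Fmap)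
  moreover have "rest \<in> local_span_vecs t"
    using insert.prems(1) unfolding local_span_vecs_def rest_def
    by (auto simp: t in_local_span_def elim: finite_subset[rotated])
  then have "rest \<in> Fmap t"
    using insert.prems(2) by (intro insert.IH) (auto simp: rest_def split: if_splits)
  ultimately have "comp + rest \<in> Fmap t" by (rule V.subspace_add[OF subspace_Fmap])
  moreover have "comp + rest = v" by (simp add: comp_def rest_def fun_eq_iff)
  ultimately show ?case by simp
qed

lemma Fmap_eq_local_span_vecs: "Fmap t = local_span_vecs t"
proof
  show "local_span_vecs t \<subseteq> Fmap t"
  proof
    fix v assume v: "v \<in> local_span_vecs t"
    then have "finite (fst ` {i. v i \<noteq> 0})" by (simp add: local_span_vecs_def)
    then show "v \<in> Fmap t" using v by (rule mem_Fmap_of_supported_local_span_vec) auto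
  qed
qed (rule Fmap_subset_local_span_vecs)

lemma local_span_vecs_subset_Vsp:
  assumes "A \<subseteq> K" "B \<subseteq> K" "C \<subseteq> K"
  shows "local_span_vecs (A, B, C) \<subseteq> Vsp K"
proof
  fix v assume v: "v \<in> local_span_vecs (A, B, C)"
  have "fst i \<in> K" if "v i \<noteq> 0" for i
  proof (cases i)
    case (Pair a b)
    have "in_local_span (A, B, C) v a" using v by (simp add: local_span_vecs_def)
    then show ?thesis using that assms Pair by (cases b) (auto simp: in_local_span_def mu3_def)
  qed
  then show "v \<in> Vsp K" using v by (auto simp: Vsp_def local_span_vecs_def)
qed

lemma Fmap_in_SubV:
  assumes "A \<subseteq> K" "B \<subseteq> K" "C \<subseteq> K"
  shows "Fmap (A, B, C) \<in> SubV K"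
  using subspace_Fmap[of "(A, B, C)"] local_span_vecs_subset_Vsp[OF assms]
  by (simp add: SubV_def Fmap_eq_local_span_vecs)

lemma mu3_balanced: "balanced (A, B, C) \<Longrightarrow> mu3 (A, B, C) = A \<inter> B \<inter> C"
  unfolding balanced_def mu3_def by blast

lemma Fmap_inject:
  assumes "balanced (A, B, C)" "balanced (A', B', C')"
    and "(Fmap (A, B, C) :: ('a, 'f::field) vec set) = Fmap (A', B', C')"
  shows "(A, B, C) = (A', B', C')"
proof -
  have eq: "(local_span_vecs (A, B, C) :: ('a, 'f) vec set) = local_span_vecs (A', B', C')"
    using assms(3) by (simp add: Fmap_eq_local_span_vecs)
  note mu3 = assms(1,2)[THEN mu3_balanced]
  have "A = A'"
    using eq mu3 xg_in_local_span_vecs_iff[where 'f='f, of _ A B C]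
      xg_in_local_span_vecs_iff[where 'f='f, of _ A' B' C'] by blast
  moreover have "B = B'"
    using eq mu3 yg_in_local_span_vecs_iff[where 'f='f, of _ A B C]
      yg_in_local_span_vecs_iff[where 'f='f, of _ A' B' C'] by blast
  moreover have "C = C'"
    using eq mu3 zg_in_local_span_vecs_iff[where 'f='f, of _ A B C]
      zg_in_local_span_vecs_iff[where 'f='f, of _ A' B' C'] by blast
  ultimately show ?thesis by simp
qed

lemma balanced_cases:
  assumes "balanced (A, B, C)"
  obtains "x \<in> A" "x \<in> B" "x \<in> C" | "x \<in> A" "x \<notin> B" "x \<notin> C" | "x \<notin> A" "x \<in> B" "x \<notin> C"
    | "x \<notin> A" "x \<notin> B" "x \<in> C" | "x \<notin> A" "x \<notin> B" "x \<notin> C"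
  using assms unfolding balanced_def by blast

lemma Fmap_m3meet:
  assumes "balanced (A, B, C)" and "balanced (A', B', C')"
  shows "(Fmap (m3meet (A, B, C) (A', B', C')) :: ('a, 'f::field) vec set)
           = Fmap (A, B, C) \<inter> Fmap (A', B', C')"
proof -
  have "in_local_span (A \<inter> A', B \<inter> B', C \<inter> C') v \<alpha>
          \<longleftrightarrow> in_local_span (A, B, C) v \<alpha> \<and> in_local_span (A', B', C') v \<alpha>"
    for v :: "('a, 'f) vec" and \<alpha>
    by (rule balanced_cases[OF assms(1), of \<alpha>]; rule balanced_cases[OF assms(2), of \<alpha>])
      (auto simp: in_local_span_def mu3_def)
  then show ?thesis
    by (auto simp: Fmap_eq_local_span_vecs local_span_vecs_def m3meet_def)
qed

lemma Fmap_bclosure: "(Fmap (bclosure t) :: ('a, 'f::field) vec set) = Fmap t"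
proof -
  obtain A B C where t: "t = (A, B, C)" by (cases t)
  have "in_local_span (bclosure t) v \<alpha> \<longleftrightarrow> in_local_span t v \<alpha>" for v :: "('a, 'f) vec" and \<alpha>
    unfolding t in_local_span_def bclosure_def mu3_def by auto
  then show ?thesis by (simp add: Fmap_eq_local_span_vecs local_span_vecs_def)
qed

lemma Fmap_m3join:
  "(Fmap (m3join (A, B, C) (A', B', C')) :: ('a, 'f::field) vec set)
     = ssum (Fmap (A, B, C)) (Fmap (A', B', C'))"
proof -
  have "(Fmap (m3join (A, B, C) (A', B', C')) :: ('a, 'f) vec set)
          = Fmap (A \<union> A', B \<union> B', C \<union> C')"
    by (simp add: m3join_def Fmap_bclosure)
  also have "\<dots> = vspan ((xg ` A \<union> yg ` B \<union> zg ` C) \<union> (xg ` A' \<union> yg ` B' \<union> zg ` C'))"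
    unfolding Fmap_eq_span by (rule arg_cong[where f = vspan]) auto
  also have "\<dots> = ssum (Fmap (A, B, C)) (Fmap (A', B', C'))"
    unfolding Fmap_eq_span vspan_def ssum_def V.span_Un ..
  finally show ?thesis .
qed

lemma Fmap_bot: "Fmap ({}, {}, {}) = {0}"
  by (simp add: Fmap_eq_span vspan_def)

lemma Fmap_top: "Fmap (K, K, K) = Vsp K"
proof
  show "Fmap (K, K, K) \<subseteq> Vsp K"
    unfolding Fmap_eq_local_span_vecs by (rule local_span_vecs_subset_Vsp) auto
  show "Vsp K \<subseteq> Fmap (K, K, K)"
  proof
    fix v assume v: "v \<in> Vsp K"
    then have "\<forall>\<alpha>. in_local_span (K, K, K) v \<alpha>"
      by (auto simp: in_local_span_def mu3_def Vsp_def)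
    with v show "v \<in> Fmap (K, K, K)"
      by (simp add: Fmap_eq_local_span_vecs local_span_vecs_def Vsp_def)
  qed
qed

lemma bounded_lattice_embedding_Fmap_M3P:
  "bounded_lattice_embedding (M3P K) m3meet m3join ({}, {}, {}) (K, K, K)
     (SubV K) (\<inter>) ssum {0} (Vsp K) (Fmap :: _ \<Rightarrow> ('a, 'f::field) vec set)"
  unfolding bounded_lattice_embedding_def
proof (intro conjI)
  show "(Fmap :: _ \<Rightarrow> ('a, 'f) vec set) ` M3P K \<subseteq> SubV K"
    by (auto simp: M3P_def intro: Fmap_in_SubV)
  show "inj_on (Fmap :: _ \<Rightarrow> ('a, 'f) vec set) (M3P K)"
    by (rule inj_onI) (auto simp: M3P_def dest: Fmap_inject)
  show "\<forall>s\<in>M3P K. \<forall>t\<in>M3P K. (Fmap (m3meet s t) :: ('a, 'f) vec set) = Fmap s \<inter> Fmap t \<and>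
      (Fmap (m3join s t) :: ('a, 'f) vec set) = ssum (Fmap s) (Fmap t)"
    by (auto simp: M3P_def Fmap_m3meet Fmap_m3join)
qed (rule Fmap_bot Fmap_top)+

lemma bounded_lattice_embedding_subset:
  "bounded_lattice_embedding L meetL joinL botL topL M meetM joinM botM topM f \<Longrightarrow> L' \<subseteq> L
     \<Longrightarrow> bounded_lattice_embedding L' meetL joinL botL topL M meetM joinM botM topM f"
  unfolding bounded_lattice_embedding_def by (auto intro: inj_on_subset)

lemma Sset_subset_M3P: "Sset K \<subseteq> M3P K"
  by (auto simp: Sset_def M3F_def M3P_def FinCof_def)

theorem theorem6p4:
  fixes K :: "'a set"
  shows "bounded_lattice_embedding (M3P K) m3meet m3join ({}, {}, {}) (K, K, K)
           (SubV K) (\<inter>) ssum {0} (Vsp K) (Fmap :: _ \<Rightarrow> ('a, 'f::field) vec set)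
       \<and> (infinite K \<longrightarrow>
           bounded_lattice_embedding (Sset K) m3meet m3join ({}, {}, {}) (K, K, K)
             (SubV K) (\<inter>) ssum {0} (Vsp K) (Fmap :: _ \<Rightarrow> ('a, 'f::field) vec set))"
  using bounded_lattice_embedding_Fmap_M3P
    bounded_lattice_embedding_subset[OF bounded_lattice_embedding_Fmap_M3P Sset_subset_M3P]
  by blast

end
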